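(* Let $X\in\mathbb{Z}^{d\times N}$ be a matrix of full rank $d$ in $B$-basic form, $X=(B\,|\,A)$ with $B\in\mathbb{Z}^{d\times d}$ a diagonal matrix of full rank with non-negative entries and $A\in\mathbb{Z}^{d\times(N-d)}$ (columns indexed by $d+1,\dots,N$). Then, up to sign, every non-zero subdeterminant of $A$ is determined by the arithmetic matroid $\mathcal{A}(X)$: precisely, if $X'=(B'\,|\,A')\in\mathbb{Z}^{d\times N}$ is also in $B$-basic form (with $B'$ diagonal of full rank with non-negative entries) and represents the same arithmetic matroid as $X$, then for all $I\subseteq[d]$ and $J\subseteq\{d+1,\dots,N\}$ with $|I|=|J|$ such that the submatrix $A_{I,J}$ of $A$ with rows $I$ and columns $J$ has $\det(A_{I,J})\neq 0$, we have $|\det(A_{I,J})|=|\det(A'_{I,J})|$.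
   Context: The arithmetic matroid $\mathcal{A}(X)$ represented by $X\in\mathbb{Z}^{d\times N}$ with columns $x_1,\dots,x_N$ is $([N],\operatorname{rk},m)$ where $\operatorname{rk}(S)$ is the dimension of the real span $\langle S\rangle_{\mathbb{R}}$ of $\{x_e:e\in S\}$ and $m(S)=|(\langle S\rangle_{\mathbb{R}}\cap\mathbb{Z}^d)/\langle S\rangle|$, with $\langle S\rangle$ the subgroup of $\mathbb{Z}^d$ generated by $\{x_e:e\in S\}$. *)

theory Defs
  imports "Jordan_Normal_Form.DL_Submatrix" "Jordan_Normal_Form.VS_Connect"
begin

text \<open>Integer matrices are JNF matrices of type int mat with 0-based indices:
  rows 0..<d, columns (ground set of the matroid) 0..<N.\<close>

definition real_col_span :: "int mat \<Rightarrow> nat set \<Rightarrow> real vec set" where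
  "real_col_span X S =
     module.span class_ring (module_vec TYPE(real) (dim_row X))
       ((\<lambda>e. map_vec real_of_int (col X e)) ` S)"

definition am_rk :: "int mat \<Rightarrow> nat set \<Rightarrow> nat" where
  "am_rk X S = vectorspace.dim class_ring
     ((module_vec TYPE(real) (dim_row X))\<lparr>carrier := real_col_span X S\<rparr>)"

definition int_col_span :: "int mat \<Rightarrow> nat set \<Rightarrow> int vec set" where
  "int_col_span X S =
     {v. \<exists>c :: nat \<Rightarrow> int. v = vec (dim_row X) (\<lambda>i. \<Sum>e\<in>S. c e * X $$ (i, e))}"

definition int_points_of_span :: "int mat \<Rightarrow> nat set \<Rightarrow> int vec set" where
  "int_points_of_span X S =
     {v \<in> carrier_vec (dim_row X). map_vec real_of_int v \<in> real_col_span X S}"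

definition am_mult :: "int mat \<Rightarrow> nat set \<Rightarrow> nat" where
  "am_mult X S = card {{v + w | w. w \<in> int_col_span X S} | v. v \<in> int_points_of_span X S}"

definition same_arith_matroid :: "int mat \<Rightarrow> int mat \<Rightarrow> bool" where
  "same_arith_matroid X X' \<longleftrightarrow> dim_col X = dim_col X' \<and>
     (\<forall>S. S \<subseteq> {0..<dim_col X} \<longrightarrow> am_rk X S = am_rk X' S \<and> am_mult X S = am_mult X' S)"

definition B_basic :: "int mat \<Rightarrow> bool" where
  "B_basic X \<longleftrightarrow> dim_row X \<le> dim_col X \<and>
     (\<forall>i<dim_row X. \<forall>j<dim_row X. i \<noteq> j \<longrightarrow> X $$ (i, j) = 0) \<and>
     (\<forall>i<dim_row X. X $$ (i, i) \<ge> 0) \<and>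
     det (submatrix X {0..<dim_row X} {0..<dim_row X}) \<noteq> 0"

end

theory Submission
  imports Defs "Jordan_Normal_Form.Column_Operations" "Jordan_Normal_Form.DL_Rank"
begin

text \<open>Put S = ([d] - I) \<union> J. After reordering its rows, the d x d column submatrix X_S is
  block triangular, with the diagonal entries b_k (k not in I) of B in one block and A_{I,J} in
  the other, so |det X_S| = (\<Prod>k. b_k) |det A_{I,J}|. Both left-hand quantities are read off the
  arithmetic matroid: m([d] - I) is the product of the b_k, and since det A_{I,J} \<noteq> 0 the set S
  is a basis, whose multiplicity is the index of the column lattice of X_S in Z^d, namely
  |det X_S|. The index is computed by bringing X_S to lower triangular form with unimodular
  column operations and counting the box of coset representatives cut out by its diagonal.\<close>

lemma bij_betw_pick:
  assumes "finite S"
  shows "bij_betw (pick S) {0..<card S} S"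
proof (rule bij_betw_imageI)
  show "inj_on (pick S) {0..<card S}"
  proof (rule inj_onI)
    fix x y assume xy: "x \<in> {0..<card S}" "y \<in> {0..<card S}" "pick S x = pick S y"
    then have "card {a\<in>S. a < pick S x} = card {a\<in>S. a < pick S y}" by simp
    then show "x = y" using card_pick_le xy by (metis atLeastLessThan_iff)
  qed
  show "pick S ` {0..<card S} = S"
  proof
    show "pick S ` {0..<card S} \<subseteq> S" using pick_in_set_le by auto
    show "S \<subseteq> pick S ` {0..<card S}"
    proof
      fix e assume e: "e \<in> S"
      have "card {a\<in>S. a < e} < card S" by (rule psubset_card_mono[OF assms]) (use e in auto)
      then show "e \<in> pick S ` {0..<card S}"
        using pick_card_in_set[OF e] by (intro image_eqI[where x = "card {a\<in>S. a < e}"]) auto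
    qed
  qed
qed

lemma pick_eq_iff:
  assumes "finite S" "i < card S" "j < card S"
  shows "pick S i = pick S j \<longleftrightarrow> i = j"
  using bij_betw_imp_inj_on[OF bij_betw_pick[OF assms(1)]] assms(2,3) by (auto dest: inj_onD)

lemma pick_atLeastLessThan:
  assumes "j < n"
  shows "pick {0..<n} j = j"
proof -
  have "{a\<in>{0..<n}. a < j} = {0..<j}" using assms by auto
  then show ?thesis using pick_card_in_set[of j "{0..<n}"] assms by simp
qed

lemma pick_Un_low:
  assumes "\<And>a b. a \<in> A \<Longrightarrow> b \<in> B \<Longrightarrow> a < b" and "j < card A"
  shows "pick (A \<union> B) j = pick A j"
proof -
  have "pick A j \<in> A" using pick_in_set_le[OF assms(2)] .
  then have "{a\<in>A \<union> B. a < pick A j} = {a\<in>A. a < pick A j}" using assms(1) by fastforce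
  then show ?thesis
    using card_pick_le[OF assms(2)] pick_card_in_set[of "pick A j" "A \<union> B"] \<open>pick A j \<in> A\<close> by simp
qed

lemma pick_Un_high:
  assumes "finite A" "finite B" and "\<And>a b. a \<in> A \<Longrightarrow> b \<in> B \<Longrightarrow> a < b" and "q < card B"
  shows "pick (A \<union> B) (card A + q) = pick B q"
proof -
  let ?x = "pick B q"
  have xB: "?x \<in> B" using pick_in_set_le[OF assms(4)] .
  have "{a\<in>A \<union> B. a < ?x} = A \<union> {a\<in>B. a < ?x}" using assms(3) xB by fastforce
  moreover have "A \<inter> {a\<in>B. a < ?x} = {}" using assms(3) by fastforce
  ultimately have "card {a\<in>A \<union> B. a < ?x} = card A + q"
    using card_Un_disjoint[of A "{a\<in>B. a < ?x}"] card_pick_le[OF assms(4)] assms(1,2) by simp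
  then show ?thesis using pick_card_in_set[of ?x "A \<union> B"] xB by simp
qed

section \<open>Cosets of integer column lattices\<close>

lemma int_eq_if_dvd_diff:
  fixes r r' b :: int
  assumes "0 \<le> r" "r < \<bar>b\<bar>" "0 \<le> r'" "r' < \<bar>b\<bar>" "b dvd r - r'"
  shows "r = r'"
proof -
  have "r mod \<bar>b\<bar> = r' mod \<bar>b\<bar>" using assms(5) by (simp add: mod_eq_dvd_iff)
  then show ?thesis using assms(1-4) by simp
qed

definition int_box :: "nat \<Rightarrow> (nat \<Rightarrow> int) \<Rightarrow> int vec set" where
  "int_box n u = {v \<in> carrier_vec n. \<forall>i<n. 0 \<le> v $ i \<and> v $ i < u i}"

lemma card_int_box: "card (int_box n u) = (\<Prod>i<n. nat (u i))"
proof -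
  let ?R = "{v \<in> carrier_vec n. \<forall>i<n. 0 \<le> v $ i \<and> v $ i < u i}"
  let ?Q = "PiE {..<n} (\<lambda>i. {0..<u i})"
  have "bij_betw (\<lambda>v. restrict (\<lambda>i. v $ i) {..<n}) ?R ?Q"
  proof (rule bij_betw_byWitness[where f' = "vec n"])
    show "\<forall>v\<in>?R. vec n (restrict (\<lambda>i. v $ i) {..<n}) = v" by (auto intro!: eq_vecI)
    show "\<forall>f\<in>?Q. restrict (\<lambda>i. vec n f $ i) {..<n} = f"
    proof
      fix f assume f: "f \<in> ?Q"
      show "restrict (\<lambda>i. vec n f $ i) {..<n} = f"
      proof
        fix i show "restrict (\<lambda>i. vec n f $ i) {..<n} i = f i"
          using f by (cases "i < n") (auto simp: PiE_iff extensional_def)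
      qed
    qed
    show "(\<lambda>v. restrict (\<lambda>i. v $ i) {..<n}) ` ?R \<subseteq> ?Q"
      by (rule image_subsetI) (unfold restrict_PiE_iff, auto)
    show "vec n ` ?Q \<subseteq> ?R"
    proof
      fix v assume "v \<in> vec n ` ?Q"
      then obtain f where "f \<in> ?Q" "v = vec n f" by auto
      then show "v \<in> ?R" by (auto simp: PiE_iff)
    qed
  qed
  then have "card ?R = card ?Q" by (rule bij_betw_same_card)
  then show ?thesis unfolding int_box_def by (simp add: card_PiE)
qed

lemma int_col_span_carrier: "int_col_span Z S \<subseteq> carrier_vec (dim_row Z)"
  unfolding int_col_span_def by auto

lemma int_col_spanI:
  "v = vec (dim_row Z) (\<lambda>i. \<Sum>e\<in>S. c e * Z $$ (i, e)) \<Longrightarrow> v \<in> int_col_span Z S"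
  unfolding int_col_span_def by blast

lemma int_col_span_add:
  assumes "x \<in> int_col_span Z S" "y \<in> int_col_span Z S"
  shows "x + y \<in> int_col_span Z S"
proof -
  obtain c c' where "x = vec (dim_row Z) (\<lambda>i. \<Sum>e\<in>S. c e * Z $$ (i, e))"
    "y = vec (dim_row Z) (\<lambda>i. \<Sum>e\<in>S. c' e * Z $$ (i, e))"
    using assms unfolding int_col_span_def by auto
  then have "x + y = vec (dim_row Z) (\<lambda>i. \<Sum>e\<in>S. (c e + c' e) * Z $$ (i, e))"
    by (auto simp: sum.distrib algebra_simps)
  then show ?thesis by (rule int_col_spanI)
qed

lemma int_col_span_uminus:
  assumes "x \<in> int_col_span Z S"
  shows "- x \<in> int_col_span Z S"
proof -
  obtain c where "x = vec (dim_row Z) (\<lambda>i. \<Sum>e\<in>S. c e * Z $$ (i, e))"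
    using assms unfolding int_col_span_def by auto
  then have "- x = vec (dim_row Z) (\<lambda>i. \<Sum>e\<in>S. (- c e) * Z $$ (i, e))"
    by (auto simp: sum_negf)
  then show ?thesis by (rule int_col_spanI)
qed

lemma card_cosets_eq_card_transversal:
  fixes P R :: "int vec set"
  assumes P: "P \<subseteq> carrier_vec (dim_row Z)" and RP: "R \<subseteq> P"
    and ex: "\<And>p. p \<in> P \<Longrightarrow> \<exists>r\<in>R. p - r \<in> int_col_span Z S"
    and un: "\<And>r r'. r \<in> R \<Longrightarrow> r' \<in> R \<Longrightarrow> r - r' \<in> int_col_span Z S \<Longrightarrow> r = r'"
  shows "card {{v + w | w. w \<in> int_col_span Z S} | v. v \<in> P} = card R"
proof -
  let ?L = "int_col_span Z S" and ?n = "dim_row Z"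
  define cs where "cs v = {v + w | w. w \<in> ?L}" for v
  have L: "?L \<subseteq> carrier_vec ?n" by (rule int_col_span_carrier)
  have cs_mono: "cs p \<subseteq> cs r" if "p \<in> carrier_vec ?n" "r \<in> carrier_vec ?n" "p - r \<in> ?L" for p r
  proof
    fix x assume "x \<in> cs p"
    then obtain w where w: "w \<in> ?L" "x = p + w" unfolding cs_def by auto
    then have "x = r + ((p - r) + w)" using L that by (intro eq_vecI) auto
    moreover have "(p - r) + w \<in> ?L" using int_col_span_add w that by blast
    ultimately show "x \<in> cs r" unfolding cs_def by auto
  qed
  have cs_eq: "cs p = cs r" if "p \<in> carrier_vec ?n" "r \<in> carrier_vec ?n" "p - r \<in> ?L" for p r
  proof -
    have "r - p = - (p - r)" using that by (intro eq_vecI) auto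
    then have "r - p \<in> ?L" using int_col_span_uminus that by metis
    then show ?thesis using cs_mono that by blast
  qed
  have "{{v + w | w. w \<in> ?L} | v. v \<in> P} = cs ` P" unfolding cs_def by blast
  also have "\<dots> = cs ` R"
  proof
    show "cs ` P \<subseteq> cs ` R"
    proof
      fix x assume "x \<in> cs ` P"
      then obtain p where p: "p \<in> P" "x = cs p" by auto
      obtain r where "r \<in> R" "p - r \<in> ?L" using ex[OF p(1)] by auto
      then show "x \<in> cs ` R" using cs_eq[of p r] p RP P by blast
    qed
  qed (use RP in auto)
  also have "card (cs ` R) = card R"
  proof (rule card_image, rule inj_onI)
    fix r r' assume r: "r \<in> R" "r' \<in> R" "cs r = cs r'"
    have rc: "r \<in> carrier_vec ?n" "r' \<in> carrier_vec ?n" using r RP P by auto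
    have "r + 0\<^sub>v ?n \<in> cs r"
      unfolding cs_def int_col_span_def by (auto intro!: exI[of _ "\<lambda>_. 0"] eq_vecI)
    then obtain w where w: "w \<in> ?L" "r = r' + w" using rc r(3) unfolding cs_def by auto
    have "r - r' = w" using w L rc by (intro eq_vecI) auto
    then show "r = r'" using un r w by auto
  qed
  finally show ?thesis .
qed

section \<open>Triangularization by unimodular column operations\<close>

definition col_lattice_equiv :: "nat \<Rightarrow> int mat \<Rightarrow> int mat \<Rightarrow> bool" where
  "col_lattice_equiv n Z Z' \<longleftrightarrow> Z' \<in> carrier_mat n n
     \<and> int_col_span Z' {0..<n} = int_col_span Z {0..<n} \<and> det Z' = det Z"

lemma col_lattice_equiv_refl: "Z \<in> carrier_mat n n \<Longrightarrow> col_lattice_equiv n Z Z"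
  unfolding col_lattice_equiv_def by simp

lemma col_lattice_equiv_trans:
  "col_lattice_equiv n Z Z' \<Longrightarrow> col_lattice_equiv n Z' Z'' \<Longrightarrow> col_lattice_equiv n Z Z''"
  unfolding col_lattice_equiv_def by simp

lemma sum_fun_upd_mult:
  fixes f g :: "nat \<Rightarrow> int"
  assumes "finite A" "k \<in> A"
  shows "(\<Sum>e\<in>A. (f(k := f k + q)) e * g e) = (\<Sum>e\<in>A. f e * g e) + q * g k"
proof -
  have "(\<Sum>e\<in>A. (f(k := f k + q)) e * g e) = (\<Sum>e\<in>A. f e * g e + (if e = k then q * g k else 0))"
    by (rule sum.cong) (auto simp: algebra_simps)
  also have "\<dots> = (\<Sum>e\<in>A. f e * g e) + q * g k"
    using assms by (simp add: sum.distrib)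
  finally show ?thesis .
qed

lemma int_col_span_addcol_subset:
  fixes Z :: "int mat"
  assumes Z: "Z \<in> carrier_mat m n" and "k < n" "l < n"
  shows "int_col_span (addcol a k l Z) {0..<n} \<subseteq> int_col_span Z {0..<n}"
proof
  fix v assume "v \<in> int_col_span (addcol a k l Z) {0..<n}"
  then obtain c where v: "v = vec m (\<lambda>i. \<Sum>e\<in>{0..<n}. c e * addcol a k l Z $$ (i, e))"
    using Z unfolding int_col_span_def by auto
  have "(\<Sum>e\<in>{0..<n}. c e * addcol a k l Z $$ (i, e))
      = (\<Sum>e\<in>{0..<n}. (c(l := c l + a * c k)) e * Z $$ (i, e))" if "i < m" for i
  proof -
    have "(\<Sum>e\<in>{0..<n}. c e * addcol a k l Z $$ (i, e))
        = (\<Sum>e\<in>{0..<n}. c e * Z $$ (i, e) + (if e = k then c k * (a * Z $$ (i, l)) else 0))"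
      by (rule sum.cong) (use Z that in \<open>auto simp: algebra_simps\<close>)
    also have "\<dots> = (\<Sum>e\<in>{0..<n}. c e * Z $$ (i, e)) + c k * (a * Z $$ (i, l))"
      using assms by (simp add: sum.distrib)
    also have "\<dots> = (\<Sum>e\<in>{0..<n}. (c(l := c l + a * c k)) e * Z $$ (i, e))"
      by (subst sum_fun_upd_mult) (use assms in \<open>auto simp: algebra_simps\<close>)
    finally show ?thesis .
  qed
  then have "v = vec (dim_row Z) (\<lambda>i. \<Sum>e\<in>{0..<n}. (c(l := c l + a * c k)) e * Z $$ (i, e))"
    using v Z by (intro eq_vecI) auto
  then show "v \<in> int_col_span Z {0..<n}" by (rule int_col_spanI)
qed

lemma col_lattice_equiv_addcol:
  fixes Z :: "int mat"
  assumes Z: "Z \<in> carrier_mat n n" and kl: "k < n" "l < n" "k \<noteq> l"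
  shows "col_lattice_equiv n Z (addcol a k l Z)"
proof -
  have Z1: "addcol a k l Z \<in> carrier_mat n n" using Z by auto
  have "addcol (-a) k l (addcol a k l Z) = Z" by (rule eq_matI) (use Z kl in auto)
  then have "int_col_span Z {0..<n} \<subseteq> int_col_span (addcol a k l Z) {0..<n}"
    using int_col_span_addcol_subset[OF Z1 kl(1,2), of "-a"] by simp
  then show ?thesis
    using int_col_span_addcol_subset[OF Z kl(1,2)] Z1 Z kl unfolding col_lattice_equiv_def by auto
qed

definition lower_triangular_upto :: "nat \<Rightarrow> int mat \<Rightarrow> bool" where
  "lower_triangular_upto i Z \<longleftrightarrow> (\<forall>r<i. \<forall>j<dim_col Z. r < j \<longrightarrow> Z $$ (r, j) = 0)"

lemma lower_triangular_upto_addcol: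
  fixes Z :: "int mat"
  assumes Z: "Z \<in> carrier_mat n n" and "lower_triangular_upto i Z"
    and "i \<le> k" "i \<le> l" "k < n" "l < n"
  shows "lower_triangular_upto i (addcol a k l Z)"
  using assms unfolding lower_triangular_upto_def by auto

lemma lower_triangular_upto_SucI:
  assumes "lower_triangular_upto i Z" and "\<And>j. i < j \<Longrightarrow> j < dim_col Z \<Longrightarrow> Z $$ (i, j) = 0"
  shows "lower_triangular_upto (Suc i) Z"
  using assms unfolding lower_triangular_upto_def by (auto simp: less_Suc_eq)

lemma sum_less_by_one_term:
  fixes f g :: "nat \<Rightarrow> nat"
  assumes "finite A" "j \<in> A" "\<And>x. x \<in> A \<Longrightarrow> x \<noteq> j \<Longrightarrow> g x = f x" "g j < f j"
  shows "sum g A < sum f A"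
proof -
  have "sum g (A - {j}) = sum f (A - {j})" using assms by (intro sum.cong) auto
  then show ?thesis using assms by (simp add: sum.remove)
qed

lemma row_weight_reduce:
  fixes Z :: "int mat"
  assumes Z: "Z \<in> carrier_mat n n" and i: "i < n" and tri: "lower_triangular_upto i Z"
    and j: "i \<le> j0" "j0 < n" "i \<le> j1" "j1 < n" "j0 \<noteq> j1"
    and nz: "Z $$ (i, j0) \<noteq> 0" and le: "\<bar>Z $$ (i, j0)\<bar> \<le> \<bar>Z $$ (i, j1)\<bar>"
  obtains Z' where "col_lattice_equiv n Z Z'" "lower_triangular_upto i Z'"
    "(\<Sum>j\<in>{i..<n}. nat \<bar>Z' $$ (i, j)\<bar>) < (\<Sum>j\<in>{i..<n}. nat \<bar>Z $$ (i, j)\<bar>)"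
proof
  define y where "y = Z $$ (i, j0)"
  define x where "x = Z $$ (i, j1)"
  define Z' where "Z' = addcol (- (x div y)) j1 j0 Z"
  show "col_lattice_equiv n Z Z'" unfolding Z'_def by (rule col_lattice_equiv_addcol) (use Z j in auto)
  show "lower_triangular_upto i Z'"
    unfolding Z'_def by (rule lower_triangular_upto_addcol[OF Z tri]) (use j in auto)
  have "Z' $$ (i, j1) = x mod y"
    unfolding Z'_def using Z i j by (simp add: x_def y_def minus_mod_eq_mult_div[symmetric] algebra_simps)
  moreover have "\<bar>x mod y\<bar> < \<bar>y\<bar>" using nz unfolding y_def by (rule abs_mod_less)
  ultimately have "nat \<bar>Z' $$ (i, j1)\<bar> < nat \<bar>Z $$ (i, j1)\<bar>" using le unfolding x_def y_def by simp
  then show "(\<Sum>j\<in>{i..<n}. nat \<bar>Z' $$ (i, j)\<bar>) < (\<Sum>j\<in>{i..<n}. nat \<bar>Z $$ (i, j)\<bar>)"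
    by (rule sum_less_by_one_term[rotated 3]) (use Z i j in \<open>auto simp: Z'_def\<close>)
qed

text \<open>If the only nonzero entry of row i at or right of the diagonal is Z(i,j0), adding column
  j0 to column i and then subtracting the new column i from column j0 moves it onto the diagonal.\<close>

lemma row_single_entry_to_diagonal:
  fixes Z :: "int mat"
  assumes Z: "Z \<in> carrier_mat n n" and tri: "lower_triangular_upto i Z"
    and j0: "i < j0" "j0 < n"
    and zero: "\<And>j. i \<le> j \<Longrightarrow> j < n \<Longrightarrow> j \<noteq> j0 \<Longrightarrow> Z $$ (i, j) = 0"
  obtains Z' where "col_lattice_equiv n Z Z'" "lower_triangular_upto (Suc i) Z'"
proof
  define Z1 where "Z1 = addcol 1 i j0 Z"
  define Z2 where "Z2 = addcol (-1) j0 i Z1"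
  have Z1: "Z1 \<in> carrier_mat n n" unfolding Z1_def using Z by auto
  have "col_lattice_equiv n Z Z1" unfolding Z1_def by (rule col_lattice_equiv_addcol) (use Z j0 in auto)
  moreover have "col_lattice_equiv n Z1 Z2"
    unfolding Z2_def by (rule col_lattice_equiv_addcol) (use Z1 j0 in auto)
  ultimately show "col_lattice_equiv n Z Z2" by (rule col_lattice_equiv_trans)
  have "lower_triangular_upto i Z1"
    unfolding Z1_def by (rule lower_triangular_upto_addcol[OF Z tri]) (use j0 in auto)
  then have "lower_triangular_upto i Z2"
    unfolding Z2_def by (rule lower_triangular_upto_addcol[OF Z1]) (use j0 in auto)
  moreover have "Z2 $$ (i, j) = 0" if "i < j" "j < n" for j
    using Z Z1 that j0 zero[of i] zero[of j] unfolding Z2_def Z1_def by auto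
  ultimately show "lower_triangular_upto (Suc i) Z2"
    using Z1 unfolding Z2_def by (intro lower_triangular_upto_SucI) auto
qed

lemma lower_triangular_upto_Suc_equiv:
  fixes Z :: "int mat"
  assumes "Z \<in> carrier_mat n n" "i < n" "lower_triangular_upto i Z"
  shows "\<exists>Z'. col_lattice_equiv n Z Z' \<and> lower_triangular_upto (Suc i) Z'"
  using assms
proof (induction "\<Sum>j\<in>{i..<n}. nat \<bar>Z $$ (i, j)\<bar>" arbitrary: Z rule: less_induct)
  case less
  note Z = less.prems(1) and i = less.prems(2) and tri = less.prems(3)
  show ?case
  proof (cases "\<exists>j0 j1. i \<le> j0 \<and> j0 < n \<and> i \<le> j1 \<and> j1 < n \<and> j0 \<noteq> j1
      \<and> Z $$ (i, j0) \<noteq> 0 \<and> Z $$ (i, j1) \<noteq> 0")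
    case True
    then obtain j0 j1 where j: "i \<le> j0" "j0 < n" "i \<le> j1" "j1 < n" "j0 \<noteq> j1"
      "Z $$ (i, j0) \<noteq> 0" "Z $$ (i, j1) \<noteq> 0" by blast
    obtain Z' where Z': "col_lattice_equiv n Z Z'" "lower_triangular_upto i Z'"
      "(\<Sum>j\<in>{i..<n}. nat \<bar>Z' $$ (i, j)\<bar>) < (\<Sum>j\<in>{i..<n}. nat \<bar>Z $$ (i, j)\<bar>)"
    proof (cases "\<bar>Z $$ (i, j0)\<bar> \<le> \<bar>Z $$ (i, j1)\<bar>")
      case True then show ?thesis using row_weight_reduce[OF Z i tri j(1-5)] j(6) that by blast
    next
      case False then show ?thesis
        using row_weight_reduce[OF Z i tri j(3,4,1,2) j(5)[symmetric]] j(7) that by fastforce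
    qed
    have "Z' \<in> carrier_mat n n" using Z'(1) unfolding col_lattice_equiv_def by simp
    then obtain Z'' where "col_lattice_equiv n Z' Z''" "lower_triangular_upto (Suc i) Z''"
      using less.hyps[OF Z'(3) _ i Z'(2)] by blast
    then show ?thesis using col_lattice_equiv_trans[OF Z'(1)] by blast
  next
    case False
    show ?thesis
    proof (cases "\<exists>j0. i < j0 \<and> j0 < n \<and> Z $$ (i, j0) \<noteq> 0")
      case True
      then obtain j0 where j0: "i < j0" "j0 < n" "Z $$ (i, j0) \<noteq> 0" by blast
      have "Z $$ (i, j) = 0" if "i \<le> j" "j < n" "j \<noteq> j0" for j
        using False j0 that by auto
      then show ?thesis using row_single_entry_to_diagonal[OF Z tri j0(1,2)] by metis
    next
      case False
      then have "lower_triangular_upto (Suc i) Z"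
        using Z by (intro lower_triangular_upto_SucI[OF tri]) auto
      then show ?thesis using col_lattice_equiv_refl[OF Z] by blast
    qed
  qed
qed

lemma lower_triangular_col_lattice_equiv:
  fixes Z :: "int mat"
  assumes Z: "Z \<in> carrier_mat n n"
  obtains T where "col_lattice_equiv n Z T" "lower_triangular_upto n T"
proof -
  have "\<exists>T. col_lattice_equiv n Z T \<and> lower_triangular_upto i T" if "i \<le> n" for i
    using that
  proof (induction i)
    case 0
    then show ?case using col_lattice_equiv_refl[OF Z] by (auto simp: lower_triangular_upto_def)
  next
    case (Suc i)
    then obtain T where T: "col_lattice_equiv n Z T" "lower_triangular_upto i T" by auto
    then have "T \<in> carrier_mat n n" unfolding col_lattice_equiv_def by simp
    then show ?case
      using lower_triangular_upto_Suc_equiv[OF _ _ T(2)] Suc.prems col_lattice_equiv_trans[OF T(1)]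
      by (meson Suc_le_lessD)
  qed
  then show ?thesis using that by blast
qed

section \<open>The index of a full-rank integer lattice\<close>

lemma lower_triangular_row_sum:
  fixes T :: "int mat"
  assumes T: "T \<in> carrier_mat n n" and tri: "lower_triangular_upto n T" and k: "k < n"
    and c: "\<And>e. e < k \<Longrightarrow> c e = 0"
  shows "(\<Sum>e\<in>{0..<n}. c e * T $$ (k, e)) = c k * T $$ (k, k)"
proof -
  have "(\<Sum>e\<in>{0..<n} - {k}. c e * T $$ (k, e)) = 0"
    using T tri c by (intro sum.neutral) (auto simp: lower_triangular_upto_def nat_neq_iff)
  then show ?thesis using k by (simp add: sum.remove)
qed

lemma lower_triangular_box_transversal:
  fixes T :: "int mat"
  assumes T: "T \<in> carrier_mat n n" and tri: "lower_triangular_upto n T"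
    and nz: "\<And>i. i < n \<Longrightarrow> T $$ (i, i) \<noteq> 0" and p: "p \<in> carrier_vec n"
  obtains r where "r \<in> int_box n (\<lambda>i. \<bar>T $$ (i, i)\<bar>)" "p - r \<in> int_col_span T {0..<n}"
proof -
  let ?res = "\<lambda>c i. p $ i - (\<Sum>e\<in>{0..<n}. c e * T $$ (i, e))"
  have "\<exists>c. \<forall>i<k. 0 \<le> ?res c i \<and> ?res c i < \<bar>T $$ (i, i)\<bar>" if "k \<le> n" for k
    using that
  proof (induction k)
    case (Suc k)
    then obtain c where c: "\<forall>i<k. 0 \<le> ?res c i \<and> ?res c i < \<bar>T $$ (i, i)\<bar>" by auto
    have k: "k < n" using Suc.prems by simp
    define t where "t = T $$ (k, k)"
    define q where "q = (?res c k div \<bar>t\<bar>) * sgn t"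
    have res: "?res (c(k := c k + q)) i = ?res c i - q * T $$ (i, k)" for i
      by (subst sum_fun_upd_mult) (use k in auto)
    have "q * t = (?res c k div \<bar>t\<bar>) * \<bar>t\<bar>" unfolding q_def by (simp add: abs_sgn algebra_simps)
    then have "?res c k - q * t = ?res c k mod \<bar>t\<bar>" by (simp add: minus_div_mult_eq_mod)
    moreover have "T $$ (i, k) = 0" if "i < k" for i
      using tri T that k unfolding lower_triangular_upto_def by auto
    moreover have "0 \<le> ?res c k mod \<bar>t\<bar>" "?res c k mod \<bar>t\<bar> < \<bar>t\<bar>"
      using nz[OF k] unfolding t_def by auto
    ultimately have "\<forall>i<Suc k. 0 \<le> ?res (c(k := c k + q)) i
        \<and> ?res (c(k := c k + q)) i < \<bar>T $$ (i, i)\<bar>"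
      using c unfolding res by (auto simp: less_Suc_eq t_def)
    then show ?case by blast
  qed simp
  then obtain c where c: "\<forall>i<n. 0 \<le> ?res c i \<and> ?res c i < \<bar>T $$ (i, i)\<bar>" by blast
  show ?thesis
  proof
    show "vec n (?res c) \<in> int_box n (\<lambda>i. \<bar>T $$ (i, i)\<bar>)" using c unfolding int_box_def by auto
    have "p - vec n (?res c) = vec (dim_row T) (\<lambda>i. \<Sum>e\<in>{0..<n}. c e * T $$ (i, e))"
      using p T by (intro eq_vecI) auto
    then show "p - vec n (?res c) \<in> int_col_span T {0..<n}" by (rule int_col_spanI)
  qed
qed

lemma lower_triangular_box_unique:
  fixes T :: "int mat"
  assumes T: "T \<in> carrier_mat n n" and tri: "lower_triangular_upto n T"
    and r: "r \<in> int_box n (\<lambda>i. \<bar>T $$ (i, i)\<bar>)" "r' \<in> int_box n (\<lambda>i. \<bar>T $$ (i, i)\<bar>)"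
    and diff: "r - r' \<in> int_col_span T {0..<n}"
  shows "r = r'"
proof -
  obtain c where c: "r - r' = vec n (\<lambda>i. \<Sum>e\<in>{0..<n}. c e * T $$ (i, e))"
    using diff T unfolding int_col_span_def by auto
  have rc: "r \<in> carrier_vec n" "r' \<in> carrier_vec n" using r unfolding int_box_def by auto
  have ci: "r $ i - r' $ i = (\<Sum>e\<in>{0..<n}. c e * T $$ (i, e))" if "i < n" for i
    using arg_cong[OF c, of "\<lambda>v. v $ i"] rc that by simp
  have "r $ k = r' $ k \<and> c k = 0" if "k < n" for k
    using that
  proof (induction k rule: less_induct)
    case (less k)
    then have "r $ k - r' $ k = c k * T $$ (k, k)"
      using ci lower_triangular_row_sum[OF T tri] by simp
    moreover then have "r $ k = r' $ k"
      using r less.prems by (intro int_eq_if_dvd_diff[of _ "T $$ (k, k)"]) (auto simp: int_box_def)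
    ultimately show ?case using r less.prems by (auto simp: int_box_def)
  qed
  then show ?thesis using rc by (intro eq_vecI) auto
qed

lemma card_cosets_int_col_span_square:
  fixes Z :: "int mat"
  assumes Z: "Z \<in> carrier_mat n n" and d: "det Z \<noteq> 0"
  shows "card {{v + w | w. w \<in> int_col_span Z {0..<n}} | v. v \<in> carrier_vec n} = nat \<bar>det Z\<bar>"
proof -
  obtain T where equiv: "col_lattice_equiv n Z T" and tri: "lower_triangular_upto n T"
    using lower_triangular_col_lattice_equiv[OF Z] by blast
  then have T: "T \<in> carrier_mat n n" "int_col_span T {0..<n} = int_col_span Z {0..<n}" "det T = det Z"
    unfolding col_lattice_equiv_def by auto
  have "det T = prod_list (diag_mat T)"
    by (rule det_lower_triangular[OF _ T(1)]) (use tri T(1) in \<open>auto simp: lower_triangular_upto_def\<close>)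
  then have detT: "det T = (\<Prod>i<n. T $$ (i, i))"
    using T(1) by (simp add: prod_list_diag_prod atLeast0LessThan)
  then have nz: "T $$ (i, i) \<noteq> 0" if "i < n" for i
    using d T(3) that by (auto simp: prod_zero_iff)
  have "card {{v + w | w. w \<in> int_col_span T {0..<n}} | v. v \<in> carrier_vec n}
      = card (int_box n (\<lambda>i. \<bar>T $$ (i, i)\<bar>))"
  proof (rule card_cosets_eq_card_transversal)
    show "carrier_vec n \<subseteq> carrier_vec (dim_row T)" using T(1) by simp
    show "int_box n (\<lambda>i. \<bar>T $$ (i, i)\<bar>) \<subseteq> carrier_vec n" unfolding int_box_def by auto
    show "\<exists>r\<in>int_box n (\<lambda>i. \<bar>T $$ (i, i)\<bar>). p - r \<in> int_col_span T {0..<n}" if "p \<in> carrier_vec n" for p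
      using lower_triangular_box_transversal[OF T(1) tri nz that] by blast
  qed (rule lower_triangular_box_unique[OF T(1) tri])
  also have "\<dots> = nat \<bar>det T\<bar>"
  proof -
    have "int (\<Prod>i<n. nat \<bar>T $$ (i, i)\<bar>) = \<bar>det T\<bar>" unfolding detT abs_prod by simp
    then show ?thesis unfolding card_int_box by (metis nat_int)
  qed
  finally show ?thesis using T by simp
qed

lemma submatrix_cols_carrier:
  assumes Y: "Y \<in> carrier_mat d N" and S: "S \<subseteq> {0..<N}"
  shows "submatrix Y UNIV S \<in> carrier_mat d (card S)"
proof -
  have "{j. j < dim_col Y \<and> j \<in> S} = S" using Y S by auto
  then show ?thesis using Y by (intro carrier_matI) (simp_all add: dim_submatrix)
qed

lemma submatrix_cols_index:
  assumes Y: "Y \<in> carrier_mat d N" and S: "S \<subseteq> {0..<N}" and "i < d" "j < card S"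
  shows "submatrix Y UNIV S $$ (i, j) = Y $$ (i, pick S j)"
proof -
  have "{j. j < dim_col Y \<and> j \<in> S} = S" using Y S by auto
  then show ?thesis using submatrix_index[of i Y UNIV j S] assms by (simp add: pick_UNIV)
qed

lemma col_submatrix_cols:
  assumes Y: "Y \<in> carrier_mat d N" and S: "S \<subseteq> {0..<N}" and j: "j < card S"
  shows "col (submatrix Y UNIV S) j = col Y (pick S j)"
proof -
  have "pick S j < N" using pick_in_set_le[OF j] S by auto
  then show ?thesis
    using submatrix_cols_carrier[OF Y S] submatrix_cols_index[OF Y S _ j] Y j
    by (intro eq_vecI) auto
qed

lemma int_col_span_submatrix_cols:
  fixes Y :: "int mat"
  assumes Y: "Y \<in> carrier_mat d N" and S: "S \<subseteq> {0..<N}"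
  shows "int_col_span (submatrix Y UNIV S) {0..<card S} = int_col_span Y S"
proof -
  let ?Z = "submatrix Y UNIV S"
  have Z: "?Z \<in> carrier_mat d (card S)" by (rule submatrix_cols_carrier[OF Y S])
  have bij: "bij_betw (pick S) {0..<card S} S" using S finite_subset by (intro bij_betw_pick) blast
  have reindex: "(\<Sum>e\<in>S. c e * Y $$ (i, e)) = (\<Sum>j\<in>{0..<card S}. c (pick S j) * ?Z $$ (i, j))"
    if "i < d" for c i
    using sum.reindex_bij_betw[OF bij, of "\<lambda>e. c e * Y $$ (i, e)"]
      submatrix_cols_index[OF Y S that] by simp
  show ?thesis
  proof
    show "int_col_span ?Z {0..<card S} \<subseteq> int_col_span Y S"
    proof
      fix v assume "v \<in> int_col_span ?Z {0..<card S}"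
      then obtain c where v: "v = vec d (\<lambda>i. \<Sum>j\<in>{0..<card S}. c j * ?Z $$ (i, j))"
        using Z unfolding int_col_span_def by auto
      have "(\<Sum>e\<in>S. c (card {a\<in>S. a < e}) * Y $$ (i, e))
          = (\<Sum>j\<in>{0..<card S}. c j * ?Z $$ (i, j))" if "i < d" for i
        unfolding reindex[OF that] by (rule sum.cong) (auto simp: card_pick_le)
      then have "v = vec (dim_row Y) (\<lambda>i. \<Sum>e\<in>S. c (card {a\<in>S. a < e}) * Y $$ (i, e))"
        unfolding v using Y by (intro eq_vecI) auto
      then show "v \<in> int_col_span Y S" by (rule int_col_spanI)
    qed
    show "int_col_span Y S \<subseteq> int_col_span ?Z {0..<card S}"
    proof
      fix v assume "v \<in> int_col_span Y S"
      then obtain c where "v = vec d (\<lambda>i. \<Sum>e\<in>S. c e * Y $$ (i, e))"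
        using Y unfolding int_col_span_def by auto
      then have "v = vec (dim_row ?Z) (\<lambda>i. \<Sum>j\<in>{0..<card S}. c (pick S j) * ?Z $$ (i, j))"
        using Z reindex by (intro eq_vecI) auto
      then show "v \<in> int_col_span ?Z {0..<card S}" by (rule int_col_spanI)
    qed
  qed
qed

lemma real_col_span_submatrix_cols:
  fixes Y :: "int mat"
  assumes Y: "Y \<in> carrier_mat d N" and S: "S \<subseteq> {0..<N}"
  shows "real_col_span (submatrix Y UNIV S) {0..<card S} = real_col_span Y S"
proof -
  let ?g = "\<lambda>Z e. map_vec real_of_int (col Z e)"
  have bij: "bij_betw (pick S) {0..<card S} S" using S finite_subset by (intro bij_betw_pick) blast
  have "?g (submatrix Y UNIV S) ` {0..<card S} = ?g Y ` pick S ` {0..<card S}"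
    unfolding image_image using col_submatrix_cols[OF Y S] by (intro image_cong) auto
  also have "\<dots> = ?g Y ` S" using bij by (simp add: bij_betw_def)
  finally show ?thesis
    unfolding real_col_span_def using submatrix_cols_carrier[OF Y S] Y by simp
qed

lemma am_mult_submatrix_cols:
  assumes Y: "Y \<in> carrier_mat d N" and S: "S \<subseteq> {0..<N}"
  shows "am_mult (submatrix Y UNIV S) {0..<card S} = am_mult Y S"
  using submatrix_cols_carrier[OF Y S] Y
  unfolding am_mult_def int_points_of_span_def
    int_col_span_submatrix_cols[OF Y S] real_col_span_submatrix_cols[OF Y S] by simp

lemma am_rk_submatrix_cols:
  assumes Y: "Y \<in> carrier_mat d N" and S: "S \<subseteq> {0..<N}"
  shows "am_rk (submatrix Y UNIV S) {0..<card S} = am_rk Y S"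
  using submatrix_cols_carrier[OF Y S] Y
  unfolding am_rk_def real_col_span_submatrix_cols[OF Y S] by simp

lemma (in vec_space) col_space_eq_carrier:
  assumes A: "A \<in> carrier_mat n n" and d: "det A \<noteq> 0"
  shows "col_space A = carrier_vec n"
proof -
  obtain B where B: "B \<in> carrier_mat n n" and AB: "A * B = 1\<^sub>m n"
    using det_non_zero_imp_unit[OF A d, unfolded Units_def, of "()"] by (auto simp: ring_mat_def)
  have "A *\<^sub>v (B *\<^sub>v y) = y" if "y \<in> carrier_vec n" for y
    using A B AB that by (simp add: assoc_mult_mat_vec[symmetric])
  then show ?thesis using A B unfolding col_space_eq[OF A] by force
qed

lemma set_cols_map_mat_real:
  fixes Z :: "int mat"
  assumes "Z \<in> carrier_mat n m"
  shows "set (cols (map_mat real_of_int Z)) = (\<lambda>e. map_vec real_of_int (col Z e)) ` {0..<m}"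
  using assms unfolding cols_def by (auto simp: image_image)

lemma am_rk_square_iff:
  fixes Z :: "int mat"
  assumes Z: "Z \<in> carrier_mat n n"
  shows "am_rk Z {0..<n} = n \<longleftrightarrow> det Z \<noteq> 0"
proof -
  interpret vs: vec_space "TYPE(real)" n .
  have "am_rk Z {0..<n} = vs.rank (map_mat real_of_int Z)"
    unfolding am_rk_def vs.rank_def real_col_span_def set_cols_map_mat_real[OF Z] using Z by simp
  then show ?thesis using vs.det_rank_iff[of "map_mat real_of_int Z"] Z by simp
qed

lemma am_mult_square:
  fixes Z :: "int mat"
  assumes Z: "Z \<in> carrier_mat n n" and d: "det Z \<noteq> 0"
  shows "am_mult Z {0..<n} = nat \<bar>det Z\<bar>"
proof -
  interpret vs: vec_space "TYPE(real)" n .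
  have "det (map_mat real_of_int Z) \<noteq> 0" using d by simp
  then have "real_col_span Z {0..<n} = carrier_vec n"
    using vs.col_space_eq_carrier[of "map_mat real_of_int Z"] Z
    unfolding real_col_span_def vs.col_space_def set_cols_map_mat_real[OF Z] by simp
  then have "int_points_of_span Z {0..<n} = carrier_vec n"
    unfolding int_points_of_span_def using Z by auto
  then show ?thesis
    unfolding am_mult_def using card_cosets_int_col_span_square[OF Z d] Z by simp
qed

lemma am_rk_eq_iff_det_submatrix:
  fixes Y :: "int mat"
  assumes Y: "Y \<in> carrier_mat d N" and S: "S \<subseteq> {0..<N}" "card S = d"
  shows "am_rk Y S = d \<longleftrightarrow> det (submatrix Y UNIV S) \<noteq> 0"
  using am_rk_square_iff[of "submatrix Y UNIV S" d] submatrix_cols_carrier[OF Y S(1)]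
    am_rk_submatrix_cols[OF Y S(1)] S(2) by simp

lemma am_mult_eq_abs_det_submatrix:
  fixes Y :: "int mat"
  assumes Y: "Y \<in> carrier_mat d N" and S: "S \<subseteq> {0..<N}" "card S = d"
    and "det (submatrix Y UNIV S) \<noteq> 0"
  shows "am_mult Y S = nat \<bar>det (submatrix Y UNIV S)\<bar>"
  using am_mult_square[of "submatrix Y UNIV S" d] submatrix_cols_carrier[OF Y S(1)]
    am_mult_submatrix_cols[OF Y S(1)] assms(4) S(2) by simp

section \<open>Diagonal columns and the block determinant\<close>

lemma B_basicD:
  fixes X :: "int mat"
  assumes X: "X \<in> carrier_mat d N" and B: "B_basic X"
  shows "d \<le> N"
    and "\<And>i j. i < d \<Longrightarrow> j < d \<Longrightarrow> i \<noteq> j \<Longrightarrow> X $$ (i, j) = 0"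
    and "\<And>i. i < d \<Longrightarrow> X $$ (i, i) > 0"
proof -
  show dN: "d \<le> N" and diag: "\<And>i j. i < d \<Longrightarrow> j < d \<Longrightarrow> i \<noteq> j \<Longrightarrow> X $$ (i, j) = 0"
    using B X unfolding B_basic_def by auto
  let ?D = "submatrix X {0..<d} {0..<d}"
  have rc: "{i. i < dim_row X \<and> i \<in> {0..<d}} = {0..<d}" "{i. i < dim_col X \<and> i \<in> {0..<d}} = {0..<d}"
    using X dN by auto
  have D: "?D \<in> carrier_mat d d" by (rule carrier_matI) (unfold dim_submatrix rc, simp_all)
  have Di: "?D $$ (i, j) = X $$ (i, j)" if "i < d" "j < d" for i j
    using submatrix_index[of i X "{0..<d}" j "{0..<d}"] rc that by (simp add: pick_atLeastLessThan)
  have "det ?D = prod_list (diag_mat ?D)"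
    by (rule det_lower_triangular[OF _ D]) (use Di diag in auto)
  also have "\<dots> = (\<Prod>i=0..<d. X $$ (i, i))" using D Di by (simp add: prod_list_diag_prod)
  finally have "(\<Prod>i=0..<d. X $$ (i, i)) \<noteq> 0" using B X unfolding B_basic_def by simp
  then show "X $$ (i, i) > 0" if "i < d" for i
    using B X that unfolding B_basic_def by (force simp: prod_zero_iff order_le_less)
qed

context
  fixes X :: "int mat" and d N :: nat and Sc :: "nat set"
  assumes X: "X \<in> carrier_mat d N" and dN: "d \<le> N" and Sc: "Sc \<subseteq> {0..<d}"
    and diag: "\<And>i e. i < d \<Longrightarrow> e \<in> Sc \<Longrightarrow> i \<noteq> e \<Longrightarrow> X $$ (i, e) = 0"
    and nz: "\<And>e. e \<in> Sc \<Longrightarrow> X $$ (e, e) \<noteq> 0"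
begin

private lemma col_real_index:
  "i < d \<Longrightarrow> e \<in> Sc \<Longrightarrow>
     map_vec real_of_int (col X e) $ i = (if i = e then real_of_int (X $$ (e, e)) else 0)"
  using X dN Sc diag by auto

lemma real_col_span_diagonal_subset:
  "real_col_span X Sc \<subseteq> {v :: real vec. v \<in> carrier_vec d \<and> (\<forall>i<d. i \<notin> Sc \<longrightarrow> v $ i = 0)}"
proof
  interpret vs: vec_space "TYPE(real)" d .
  fix v assume "v \<in> real_col_span X Sc"
  then obtain a A where v: "v = vs.lincomb a A" "finite A"
      "A \<subseteq> (\<lambda>e. map_vec real_of_int (col X e)) ` Sc"
    unfolding real_col_span_def using X vs.in_spanE by (metis carrier_matD(1))
  have A: "A \<subseteq> carrier_vec d" using v(3) X by (force intro!: carrier_vecI)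
  have "v $ i = 0" if "i < d" "i \<notin> Sc" for i
  proof -
    have "v $ i = (\<Sum>x\<in>A. a x * x $ i)" unfolding v(1) by (rule vs.lincomb_index[OF that(1) A])
    also have "\<dots> = 0" using v(3) col_real_index that by (intro sum.neutral) fastforce
    finally show ?thesis .
  qed
  then show "v \<in> {v. v \<in> carrier_vec d \<and> (\<forall>i<d. i \<notin> Sc \<longrightarrow> v $ i = 0)}"
    using vs.lincomb_closed[OF A] v(1) by auto
qed

lemma real_col_span_diagonal_supset:
  fixes v :: "real vec"
  assumes v: "v \<in> carrier_vec d" "\<And>i. i < d \<Longrightarrow> i \<notin> Sc \<Longrightarrow> v $ i = 0"
  shows "v \<in> real_col_span X Sc"
proof -
  interpret vs: vec_space "TYPE(real)" d .
  define g where "g e = map_vec real_of_int (col X e)" for e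
  define b where "b e = real_of_int (X $$ (e, e))" for e
  have finSc: "finite Sc" using Sc finite_subset by blast
  have G: "g ` Sc \<subseteq> carrier_vec d" using X unfolding g_def by (force intro!: carrier_vecI)
  have gi: "g e $ i = (if i = e then b e else 0)" if "i < d" "e \<in> Sc" for i e
    unfolding g_def b_def by (rule col_real_index[OF that])
  have bnz: "b e \<noteq> 0" if "e \<in> Sc" for e using nz[OF that] unfolding b_def by simp
  have inj: "inj_on g Sc"
  proof (rule inj_onI)
    fix e e' assume e: "e \<in> Sc" "e' \<in> Sc" "g e = g e'"
    have "e < d" using e(1) Sc by auto
    then have "g e' $ e \<noteq> 0" using gi[of e e] e bnz by simp
    then show "e = e'" using gi[of e e'] \<open>e < d\<close> e(2) by (simp split: if_splits)
  qed
  define a where "a x = (\<Sum>k\<in>Sc. x $ k * v $ k / (b k)\<^sup>2)" for x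
  have ag: "a (g e) * g e $ i = (if e = i then v $ i else 0)" if i: "i < d" and e: "e \<in> Sc" for i e
  proof -
    have "a (g e) = (\<Sum>k\<in>Sc. if k = e then b e * v $ e / (b e)\<^sup>2 else 0)"
      unfolding a_def by (rule sum.cong) (use gi Sc e in auto)
    also have "\<dots> = v $ e / b e" using e finSc bnz[OF e] by (simp add: power2_eq_square)
    finally show ?thesis using gi[OF i e] bnz[OF e] by auto
  qed
  have "vs.lincomb a (g ` Sc) $ i = v $ i" if i: "i < d" for i
  proof -
    have "vs.lincomb a (g ` Sc) $ i = (\<Sum>e\<in>Sc. a (g e) * g e $ i)"
      using vs.lincomb_index[OF i G] sum.reindex[OF inj] by simp
    also have "\<dots> = (\<Sum>e\<in>Sc. if e = i then v $ i else 0)" using ag i by (intro sum.cong) auto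
    also have "\<dots> = v $ i" using finSc v(2)[OF i] by auto
    finally show ?thesis .
  qed
  then have "v = vs.lincomb a (g ` Sc)"
    using vs.lincomb_dim[OF _ G] finSc v(1) by (intro eq_vecI) auto
  then have "v \<in> vs.span (g ` Sc)" using G finSc by (intro vs.in_spanI[where A = "g ` Sc"]) auto
  then show ?thesis unfolding real_col_span_def g_def using X by simp
qed

lemma int_points_of_span_diagonal:
  "int_points_of_span X Sc = {v \<in> carrier_vec d. \<forall>i<d. i \<notin> Sc \<longrightarrow> v $ i = 0}"
proof (intro equalityI subsetI)
  fix v :: "int vec" assume "v \<in> int_points_of_span X Sc"
  then have "v \<in> carrier_vec d" "map_vec real_of_int v \<in> real_col_span X Sc"
    using X unfolding int_points_of_span_def by auto
  then show "v \<in> {v \<in> carrier_vec d. \<forall>i<d. i \<notin> Sc \<longrightarrow> v $ i = 0}"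
    using real_col_span_diagonal_subset by auto
next
  fix v :: "int vec" assume "v \<in> {v \<in> carrier_vec d. \<forall>i<d. i \<notin> Sc \<longrightarrow> v $ i = 0}"
  then have "map_vec real_of_int v \<in> real_col_span X Sc"
    by (intro real_col_span_diagonal_supset) auto
  then show "v \<in> int_points_of_span X Sc"
    using X \<open>v \<in> {v \<in> carrier_vec d. _}\<close> unfolding int_points_of_span_def by auto
qed

lemma int_col_span_diagonal:
  "int_col_span X Sc = {vec d (\<lambda>i. if i \<in> Sc then c i * X $$ (i, i) else 0) | c. True}"
proof -
  have "(\<Sum>e\<in>Sc. c e * X $$ (i, e)) = (if i \<in> Sc then c i * X $$ (i, i) else 0)" if "i < d" for c i
  proof -
    have "(\<Sum>e\<in>Sc. c e * X $$ (i, e)) = (\<Sum>e\<in>Sc. if i = e then c e * X $$ (e, e) else 0)"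
      using diag that by (intro sum.cong) auto
    then show ?thesis using finite_subset[OF Sc] by (simp add: sum.delta)
  qed
  then show ?thesis unfolding int_col_span_def using X by (auto intro!: eq_vecI)
qed

lemma am_mult_diagonal: "am_mult X Sc = (\<Prod>k\<in>Sc. nat \<bar>X $$ (k, k)\<bar>)"
proof -
  let ?P = "{v \<in> carrier_vec d. \<forall>i<d. i \<notin> Sc \<longrightarrow> v $ i = 0}"
  let ?u = "\<lambda>i. if i \<in> Sc then \<bar>X $$ (i, i)\<bar> else 1"
  have "am_mult X Sc = card {{v + w | w. w \<in> int_col_span X Sc} | v. v \<in> ?P}"
    unfolding am_mult_def int_points_of_span_diagonal ..
  also have "\<dots> = card (int_box d ?u)"
  proof (rule card_cosets_eq_card_transversal)
    show "?P \<subseteq> carrier_vec (dim_row X)" using X by auto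
    show "int_box d ?u \<subseteq> ?P" unfolding int_box_def by auto
    show "\<exists>r\<in>int_box d ?u. p - r \<in> int_col_span X Sc" if p: "p \<in> ?P" for p
    proof
      let ?r = "vec d (\<lambda>i. if i \<in> Sc then p $ i mod \<bar>X $$ (i, i)\<bar> else 0)"
      show "?r \<in> int_box d ?u" unfolding int_box_def using nz by auto
      have "(x div \<bar>b\<bar> * sgn b) * b = x - x mod \<bar>b\<bar>" for x b :: int
        by (simp add: minus_mod_eq_div_mult abs_sgn ac_simps)
      then have "p - ?r = vec d (\<lambda>i. if i \<in> Sc
          then (p $ i div \<bar>X $$ (i, i)\<bar> * sgn (X $$ (i, i))) * X $$ (i, i) else 0)"
        using p by (intro eq_vecI) auto
      then show "p - ?r \<in> int_col_span X Sc" unfolding int_col_span_diagonal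
        by (auto intro!: exI[of _ "\<lambda>i. p $ i div \<bar>X $$ (i, i)\<bar> * sgn (X $$ (i, i))"])
    qed
    show "r = r'" if r: "r \<in> int_box d ?u" "r' \<in> int_box d ?u"
      and diff: "r - r' \<in> int_col_span X Sc" for r r'
    proof (rule eq_vecI)
      obtain c where c: "r - r' = vec d (\<lambda>i. if i \<in> Sc then c i * X $$ (i, i) else 0)"
        using diff unfolding int_col_span_diagonal by blast
      fix i assume "i < dim_vec r'"
      then have i: "i < d" using r unfolding int_box_def by auto
      have "r $ i - r' $ i = (if i \<in> Sc then c i * X $$ (i, i) else 0)"
        using arg_cong[OF c, of "\<lambda>v. v $ i"] r i unfolding int_box_def by auto
      then show "r $ i = r' $ i"
        using r i by (cases "i \<in> Sc") (auto simp: int_box_def intro!: int_eq_if_dvd_diff)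
    qed (use r in \<open>auto simp: int_box_def\<close>)
  qed
  also have "\<dots> = (\<Prod>i\<in>{..<d} \<inter> Sc. nat \<bar>X $$ (i, i)\<bar>)"
    unfolding card_int_box prod.inter_restrict[OF finite_lessThan] by (intro prod.cong) auto
  also have "{..<d} \<inter> Sc = Sc" using Sc by auto
  finally show ?thesis .
qed

end


lemma pick_concat_permutes:
  assumes A: "finite A" and B: "finite B" and disj: "A \<inter> B = {}" and AB: "A \<union> B = {0..<n}"
  shows "(\<lambda>i. if i < card A then pick A i else if i < n then pick B (i - card A) else i) permutes {0..<n}"
    (is "?\<sigma> permutes _")
proof (rule bij_imp_permutes)
  have n: "card A + card B = n" using card_Un_disjoint[OF A B disj] AB by simp
  have inA: "?\<sigma> i \<in> A" if "i < card A" for i using that pick_in_set_le by simp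
  have inB: "?\<sigma> i \<in> B" if "card A \<le> i" "i < n" for i
    using that n pick_in_set_le[of "i - card A" B] by simp
  have into: "?\<sigma> ` {0..<n} \<subseteq> {0..<n}"
    using inA inB AB by (force simp: not_less)
  have "inj_on ?\<sigma> {0..<n}"
  proof (rule inj_onI)
    fix x y assume x: "x \<in> {0..<n}" and y: "y \<in> {0..<n}" and eq: "?\<sigma> x = ?\<sigma> y"
    consider "x < card A" "y < card A" | "card A \<le> x" "card A \<le> y"
      | "x < card A" "card A \<le> y" | "card A \<le> x" "y < card A" by linarith
    then show "x = y"
    proof cases
      case 1 then show ?thesis using eq pick_eq_iff[OF A] by auto
    next
      case 2 then show ?thesis using eq x y n pick_eq_iff[OF B, of "x - card A" "y - card A"] by auto
    next
      case 3 then show ?thesis using eq inA[of x] inB[of y] y disj by auto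
    next
      case 4 then show ?thesis using eq inA[of y] inB[of x] x disj by auto
    qed
  qed
  then show "bij_betw ?\<sigma> {0..<n} {0..<n}"
    using into endo_inj_surj[of "{0..<n}" ?\<sigma>] by (simp add: bij_betw_def)
qed (use card_Un_disjoint[OF A B disj] AB in auto)

text \<open>Reordering the rows as ([d] - I, I) turns the submatrix into the block matrix
  (diag(X(k,k)) for k not in I, *; 0, X(I,J)).\<close>

lemma det_submatrix_diagonal_block:
  fixes X :: "int mat"
  assumes X: "X \<in> carrier_mat d N" and dN: "d \<le> N"
    and diag: "\<And>i j. i < d \<Longrightarrow> j < d \<Longrightarrow> i \<noteq> j \<Longrightarrow> X $$ (i, j) = 0"
    and I: "I \<subseteq> {0..<d}" and J: "J \<subseteq> {d..<N}" and IJ: "card I = card J"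
  shows "\<bar>det (submatrix X UNIV (({0..<d} - I) \<union> J))\<bar>
       = \<bar>\<Prod>k\<in>{0..<d} - I. X $$ (k, k)\<bar> * \<bar>det (submatrix X I J)\<bar>"
proof -
  define Sc where "Sc = {0..<d} - I"
  define S where "S = Sc \<union> J"
  define s where "s = card Sc"
  define t where "t = card I"
  have fin: "finite I" "finite J" "finite Sc" using I J finite_subset unfolding Sc_def by auto
  have "Sc \<inter> I = {}" "Sc \<union> I = {0..<d}" using I unfolding Sc_def by auto
  then have st: "s + t = d" using card_Un_disjoint[of Sc I] fin unfolding s_def t_def by simp
  have ltJ: "a < b" if "a \<in> Sc" "b \<in> J" for a b using that J unfolding Sc_def by auto
  have SN: "S \<subseteq> {0..<N}" unfolding S_def Sc_def using J dN by auto
  have cS: "card S = d"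
    unfolding S_def using card_Un_disjoint[of Sc J] fin ltJ st IJ s_def t_def by fastforce
  let ?T = "submatrix X UNIV S"
  have T: "?T \<in> carrier_mat d d" using submatrix_cols_carrier[OF X SN] cS by simp
  have pS: "pick S j = (if j < s then pick Sc j else pick J (j - s))" if "j < d" for j
    using that pick_Un_low[OF ltJ, where j = j] pick_Un_high[OF fin(3,2) ltJ, where q = "j - s"] st IJ
    unfolding S_def s_def t_def by auto
  define \<sigma> where "\<sigma> i = (if i < s then pick Sc i else if i < d then pick I (i - s) else i)" for i
  have perm: "\<sigma> permutes {0..<d}" unfolding \<sigma>_def s_def
    by (rule pick_concat_permutes) (use fin I in \<open>auto simp: Sc_def\<close>)
  let ?M = "mat d d (\<lambda>(i, j). ?T $$ (\<sigma> i, j))"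
  have "det ?M = signof \<sigma> * det ?T" by (rule det_permute_rows[OF T perm])
  then have detM: "\<bar>det ?M\<bar> = \<bar>det ?T\<bar>" using signof_pm_one[of \<sigma>] by (auto simp: abs_mult)
  define D where "D = mat s s (\<lambda>(i, j). if i = j then X $$ (pick Sc i, pick Sc i) else 0)"
  define U where "U = mat s t (\<lambda>(i, j). X $$ (pick Sc i, pick J j))"
  let ?A = "submatrix X I J"
  have rcIJ: "{i. i < dim_row X \<and> i \<in> I} = I" "{j. j < dim_col X \<and> j \<in> J} = J" using X I J by auto
  have A: "?A \<in> carrier_mat t t" by (rule carrier_matI) (unfold dim_submatrix rcIJ, simp_all add: t_def IJ)
  have "?M = four_block_mat D U (0\<^sub>m t s) ?A"
  proof (rule eq_matI)
    fix i j assume "i < dim_row (four_block_mat D U (0\<^sub>m t s) ?A)"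
      "j < dim_col (four_block_mat D U (0\<^sub>m t s) ?A)"
    then have ij: "i < d" "j < d" using A st by (auto simp: D_def U_def)
    have \<sigma>i: "\<sigma> i = (if i < s then pick Sc i else pick I (i - s))" using ij unfolding \<sigma>_def by simp
    have mem: "pick Sc i \<in> Sc" if "i < s" for i using that pick_in_set_le s_def by simp
    have memI: "pick I (i - s) \<in> I" if "\<not> i < s" using that ij st pick_in_set_le t_def by simp
    have lhs: "?M $$ (i, j) = X $$ (\<sigma> i, pick S j)"
      using ij T perm submatrix_cols_index[OF X SN] cS by (simp add: permutes_in_image)
    have rhs: "four_block_mat D U (0\<^sub>m t s) ?A $$ (i, j) = (if i < s then
        if j < s then D $$ (i, j) else U $$ (i, j - s)
        else if j < s then 0 else ?A $$ (i - s, j - s))"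
      using ij st A by (simp add: D_def U_def)
    show "?M $$ (i, j) = four_block_mat D U (0\<^sub>m t s) ?A $$ (i, j)"
    proof (cases "i < s"; cases "j < s")
      assume "i < s" "j < s"
      then show ?thesis
        using lhs rhs mem[of i] mem[of j] diag[of "pick Sc i" "pick Sc j"] pick_eq_iff[OF fin(3), of i j]
        unfolding \<sigma>i pS[OF ij(2)] D_def by (auto simp: Sc_def s_def)
    next
      assume a: "\<not> i < s" "j < s"
      then have "pick I (i - s) \<noteq> pick Sc j" "pick I (i - s) < d" "pick Sc j < d"
        using memI mem[of j] I unfolding Sc_def by auto
      then show ?thesis using a lhs rhs diag unfolding \<sigma>i pS[OF ij(2)] by simp
    next
      assume "i < s" "\<not> j < s"
      then show ?thesis using lhs rhs unfolding \<sigma>i pS[OF ij(2)] U_def using ij st by simp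
    next
      assume "\<not> i < s" "\<not> j < s"
      then show ?thesis
        using lhs rhs ij st submatrix_index[of "i - s" X I "j - s" J]
        unfolding \<sigma>i pS[OF ij(2)] rcIJ by (simp add: t_def IJ)
    qed
  qed (use A st in \<open>auto simp: D_def U_def\<close>)
  moreover have "det (four_block_mat D U (0\<^sub>m t s) ?A) = det D * det ?A"
    by (rule det_four_block_mat_lower_left_zero[OF _ _ _ A]) (simp_all add: D_def U_def)
  ultimately have "det ?M = det D * det ?A" by simp
  also have "det D = (\<Prod>k\<in>Sc. X $$ (k, k))"
  proof -
    have "det D = (\<Prod>i=0..<s. X $$ (pick Sc i, pick Sc i))"
      by (subst det_lower_triangular[of s]) (auto simp: D_def prod_list_diag_prod)
    then show ?thesis
      using prod.reindex_bij_betw[OF bij_betw_pick[OF fin(3)], of "\<lambda>k. X $$ (k, k)"] s_def by simp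
  qed
  finally show ?thesis using detM unfolding S_def Sc_def by (simp add: abs_mult)
qed

lemma same_arith_matroid_abs_det_submatrix:
  fixes X X' :: "int mat"
  assumes X: "X \<in> carrier_mat d N" and X': "X' \<in> carrier_mat d N"
    and same: "same_arith_matroid X X'"
    and S: "S \<subseteq> {0..<N}" "card S = d" and nz: "det (submatrix X UNIV S) \<noteq> 0"
  shows "\<bar>det (submatrix X UNIV S)\<bar> = \<bar>det (submatrix X' UNIV S)\<bar>"
proof -
  have eq: "am_rk X S = am_rk X' S" "am_mult X S = am_mult X' S"
    using same S X unfolding same_arith_matroid_def by auto
  have "det (submatrix X' UNIV S) \<noteq> 0"
    using am_rk_eq_iff_det_submatrix[OF X S] am_rk_eq_iff_det_submatrix[OF X' S] eq(1) nz by simp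
  then have "nat \<bar>det (submatrix X UNIV S)\<bar> = nat \<bar>det (submatrix X' UNIV S)\<bar>"
    using am_mult_eq_abs_det_submatrix[OF X S nz] am_mult_eq_abs_det_submatrix[OF X' S] eq(2) by simp
  then show ?thesis by simp
qed

lemma B_basic_am_mult_diagonal:
  fixes X :: "int mat"
  assumes X: "X \<in> carrier_mat d N" and B: "B_basic X" and Sc: "Sc \<subseteq> {0..<d}"
  shows "int (am_mult X Sc) = (\<Prod>k\<in>Sc. X $$ (k, k))"
proof -
  have pos: "X $$ (k, k) > 0" if "k \<in> Sc" for k using B_basicD(3)[OF X B] that Sc by auto
  have "am_mult X Sc = (\<Prod>k\<in>Sc. nat \<bar>X $$ (k, k)\<bar>)"
  proof (rule am_mult_diagonal[OF X B_basicD(1)[OF X B] Sc])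
    show "X $$ (i, e) = 0" if "i < d" "e \<in> Sc" "i \<noteq> e" for i e
      using B_basicD(2)[OF X B] that Sc by auto
    show "X $$ (e, e) \<noteq> 0" if "e \<in> Sc" for e using pos[OF that] by simp
  qed
  also have "int \<dots> = (\<Prod>k\<in>Sc. X $$ (k, k))"
    unfolding of_nat_prod by (intro prod.cong) (simp_all add: less_imp_le[OF pos])
  finally show ?thesis .
qed

lemma B_basic_abs_det_submatrix_block:
  fixes X :: "int mat"
  assumes X: "X \<in> carrier_mat d N" and B: "B_basic X"
    and I: "I \<subseteq> {0..<d}" and J: "J \<subseteq> {d..<N}" and IJ: "card I = card J"
  shows "\<bar>det (submatrix X UNIV (({0..<d} - I) \<union> J))\<bar>
       = (\<Prod>k\<in>{0..<d} - I. X $$ (k, k)) * \<bar>det (submatrix X I J)\<bar>"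
proof -
  have "(\<Prod>k\<in>{0..<d} - I. X $$ (k, k)) > 0" using B_basicD(3)[OF X B] by (intro prod_pos) auto
  then show ?thesis
    using det_submatrix_diagonal_block[OF X B_basicD(1,2)[OF X B] I J IJ] by simp
qed

lemma card_Diff_Un_eq:
  assumes I: "I \<subseteq> {0..<d}" and J: "J \<subseteq> {d..<N}" and IJ: "card I = card J"
  shows "card (({0..<d} - I) \<union> J) = d"
proof -
  have "finite J" using J finite_subset by blast
  moreover have "({0..<d} - I) \<inter> J = {}" using J by auto
  moreover have "card ({0..<d} - I) + card I = d"
  proof -
    have "({0..<d} - I) \<union> I = {0..<d}" "({0..<d} - I) \<inter> I = {}" using I by auto
    then show ?thesis using card_Un_disjoint[of "{0..<d} - I" I] finite_subset[OF I] by simp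
  qed
  ultimately show ?thesis using card_Un_disjoint[of "{0..<d} - I" J] IJ by simp
qed

theorem lemma3p4:
  fixes X X' :: "int mat" and d N :: nat
  assumes "X \<in> carrier_mat d N" and "X' \<in> carrier_mat d N"
    and "am_rk X {0..<N} = d"
    and "B_basic X" and "B_basic X'"
    and "same_arith_matroid X X'"
    and "I \<subseteq> {0..<d}" and "J \<subseteq> {d..<N}" and "card I = card J"
    and "det (submatrix X I J) \<noteq> 0"
  shows "\<bar>det (submatrix X I J)\<bar> = \<bar>det (submatrix X' I J)\<bar>"
proof -
  note X = assms(1) and X' = assms(2) and IJ = assms(7-9)
  define S where "S = ({0..<d} - I) \<union> J"
  define P where "P = (\<Prod>k\<in>{0..<d} - I. X $$ (k, k))"
  have dN: "d \<le> N" using B_basicD(1)[OF X assms(4)] .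
  have S: "S \<subseteq> {0..<N}" "card S = d" using IJ dN card_Diff_Un_eq[OF IJ] unfolding S_def by auto
  have "{0..<d} - I \<subseteq> {0..<dim_col X}" using X dN by auto
  then have "am_mult X ({0..<d} - I) = am_mult X' ({0..<d} - I)"
    using assms(6) unfolding same_arith_matroid_def by blast
  then have diag: "(\<Prod>k\<in>{0..<d} - I. X' $$ (k, k)) = P"
    using B_basic_am_mult_diagonal[OF X assms(4), of "{0..<d} - I"]
      B_basic_am_mult_diagonal[OF X' assms(5), of "{0..<d} - I"] unfolding P_def by auto
  have pos: "P > 0" unfolding P_def using B_basicD(3)[OF X assms(4)] by (intro prod_pos) auto
  have block: "\<bar>det (submatrix X UNIV S)\<bar> = P * \<bar>det (submatrix X I J)\<bar>"
    "\<bar>det (submatrix X' UNIV S)\<bar> = P * \<bar>det (submatrix X' I J)\<bar>"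
    using B_basic_abs_det_submatrix_block[OF X assms(4) IJ] B_basic_abs_det_submatrix_block[OF X' assms(5) IJ]
    unfolding S_def P_def diag by simp_all
  then have "det (submatrix X UNIV S) \<noteq> 0" using pos assms(10) by auto
  then have "\<bar>det (submatrix X UNIV S)\<bar> = \<bar>det (submatrix X' UNIV S)\<bar>"
    by (rule same_arith_matroid_abs_det_submatrix[OF X X' assms(6) S])
  then show ?thesis using block pos by simp
qed

end
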